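(* Let $e\geqslant 1$ be an integer and $b\geqslant 2$ an even integer. Assume that for every integer $a$ there exists an $(e,b)$-happy number $h$ with $h\equiv a\pmod{b-1}$. Then for every integer $a$ there exists an $(e,b)$-happy number $h'$ with $h'\equiv a\pmod{(b-1)^e}$.
   Context: For a positive integer $n=\sum_{j=0}^k a_j b^j$ with $0\leqslant a_j<b$, $T_{e,b}(n)=\sum_{j=0}^k a_j^e$; $T_{e,b}^r$ is the $r$-th iterate, $T_{e,b}^0(n)=n$. A positive integer $n$ is $(e,b)$-happy if $T_{e,b}^r(n)=1$ for some $r\geqslant 0$. *)

theory Defs
  imports "HOL-Number_Theory.Cong"
begin

fun T :: "nat \<Rightarrow> nat \<Rightarrow> nat \<Rightarrow> nat" where
  "T e b n = (if n = 0 \<or> b < 2 then 0 else (n mod b) ^ e + T e b (n div b))"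

definition happy :: "nat \<Rightarrow> nat \<Rightarrow> nat \<Rightarrow> bool" where
  "happy e b n \<longleftrightarrow> n > 0 \<and> (\<exists>r. (T e b ^^ r) n = 1)"

end

theory Submission
  imports Defs "HOL-Number_Theory.Residues"
begin

text \<open>Write \<open>m = b - 1\<close> and pick \<open>L\<close> with \<open>b^L \<equiv> 1 (mod m^e)\<close>. Concatenating \<open>i\<close>
  blocks \<open>0\<dots>01\<close> and \<open>j\<close> blocks \<open>0\<dots>010\<close> of length \<open>L\<close> gives a number \<open>N\<close> with
  \<open>T(N) = i + j\<close> and \<open>N \<equiv> i + j b = (i + j) + j m (mod m^e)\<close>. Given a happy \<open>h \<equiv> a (mod m)\<close>,
  choose \<open>j < m^(e-1)\<close> with \<open>h + j m \<equiv> a (mod m^e)\<close> and \<open>i = h - j\<close>: then \<open>T(N) = h\<close>, so \<open>N\<close>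
  is happy. Appending zeros to \<open>h\<close> beforehand ensures \<open>j \<le> h\<close>.\<close>

declare T.simps [simp del]

lemma T_0 [simp]: "T e b 0 = 0"
  by (simp add: T.simps)

lemma T_mult_add_digit:
  assumes "b \<ge> 2" "e \<ge> 1" "d < b"
  shows "T e b (q * b + d) = d ^ e + T e b q"
proof (cases "q * b + d = 0")
  case True
  then show ?thesis using assms by simp
next
  case False
  then show ?thesis using assms by (subst T.simps) simp
qed

lemma T_mult_power_add:
  assumes "b \<ge> 2" "e \<ge> 1" "y < b ^ j"
  shows "T e b (x * b ^ j + y) = T e b x + T e b y"
  using assms(3)
proof (induction j arbitrary: y)
  case 0
  then show ?case by simp
next
  case (Suc j)
  have "y div b < b ^ j"
    using Suc.prems assms(1) by (simp add: less_mult_imp_div_less mult.commute)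
  moreover have "x * b ^ Suc j + y = (x * b ^ j + y div b) * b + y mod b"
    by (simp add: algebra_simps)
  moreover have "T e b y = (y mod b) ^ e + T e b (y div b)"
    using T_mult_add_digit[OF assms(1,2), of "y mod b" "y div b"] assms(1) by simp
  ultimately show ?case
    using Suc.IH assms(1,2) by (simp add: T_mult_add_digit)
qed

lemma T_mult_base_power:
  assumes "b \<ge> 2" "e \<ge> 1"
  shows "T e b (n * b ^ k) = T e b n"
  using T_mult_power_add[OF assms, of 0 k n] assms by simp

lemma T_1:
  assumes "b \<ge> 2" "e \<ge> 1"
  shows "T e b 1 = 1"
  using T_mult_add_digit[OF assms, of 1 0] assms by simp

lemma T_base:
  assumes "b \<ge> 2" "e \<ge> 1"
  shows "T e b b = 1"
  using T_mult_base_power[OF assms, of 1 1] T_1[OF assms] by simp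

lemma happy_if_happy_T:
  assumes "happy e b (T e b n)" "n > 0"
  shows "happy e b n"
proof -
  obtain r where "(T e b ^^ r) (T e b n) = 1"
    using assms(1) unfolding happy_def by blast
  then have "(T e b ^^ Suc r) n = 1"
    by (simp only: funpow_Suc_right o_apply)
  then show ?thesis
    using assms(2) unfolding happy_def by blast
qed

lemma happy_if_same_T:
  assumes "b \<ge> 2" "e \<ge> 1" "happy e b h" "T e b n = T e b h" "n > 0"
  shows "happy e b n"
proof -
  obtain r where r: "(T e b ^^ r) h = 1"
    using assms(3) unfolding happy_def by blast
  show ?thesis
  proof (cases r)
    case 0
    then have "(T e b ^^ 1) n = 1"
      using r assms(4) T_1[OF assms(1,2)] by simp
    then show ?thesis
      using assms(5) unfolding happy_def by blast
  next
    case (Suc s)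
    then have "(T e b ^^ Suc s) n = 1"
      using r assms(4) by (simp only: funpow_Suc_right o_apply)
    then show ?thesis
      using assms(5) unfolding happy_def by blast
  qed
qed

lemma happy_mult_base_power:
  assumes "b \<ge> 2" "e \<ge> 1" "happy e b h"
  shows "happy e b (h * b ^ k)"
  using happy_if_same_T[OF assms] T_mult_base_power[OF assms(1,2)] assms
  unfolding happy_def by simp

lemma exists_power_cong_one_gt_base:
  fixes b M :: nat
  assumes "coprime b M" "b \<ge> 2"
  obtains L where "b < b ^ L" "[b ^ L = 1] (mod M)"
proof
  have "M > 0"
    using assms by (auto intro: Nat.gr0I)
  then have "totient M \<ge> 1"
    by (simp add: Suc_le_eq)
  then show "b < b ^ (totient M * 2)"
    using assms(2) power_strict_increasing[of 1 "totient M * 2" b] by simp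
  show "[b ^ (totient M * 2) = 1] (mod M)"
    using cong_pow[OF euler_theorem[OF assms(1)], of 2] by (simp add: power_mult)
qed

lemma exists_T_and_residue:
  fixes b M :: nat
  assumes "b \<ge> 2" "e \<ge> 1" "coprime b M"
  shows "\<exists>N. T e b N = i + j \<and> [N = i + j * b] (mod M)"
proof -
  obtain L where L: "b < b ^ L" "[b ^ L = 1] (mod M)"
    using exists_power_cong_one_gt_base[OF assms(3,1)] .
  have append_block: "T e b (N * b ^ L + d) = T e b N + 1 \<and> [N * b ^ L + d = N + d] (mod M)"
    if "d \<in> {1, b}" for N d
  proof
    have "d < b ^ L" "T e b d = 1"
      using that L(1) assms(1) T_1[OF assms(1,2)] T_base[OF assms(1,2)] by auto
    then show "T e b (N * b ^ L + d) = T e b N + 1"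
      using T_mult_power_add[OF assms(1,2)] by simp
    show "[N * b ^ L + d = N + d] (mod M)"
      using cong_add[OF cong_mult[OF cong_refl L(2)] cong_refl, of N d] by simp
  qed
  have "\<exists>N. T e b N = i \<and> [N = i] (mod M)"
  proof (induction i)
    case (Suc i)
    then obtain N where N: "T e b N = i" "[N = i] (mod M)" by blast
    have "[N * b ^ L + 1 = N + 1] (mod M)" "T e b (N * b ^ L + 1) = i + 1"
      using append_block[of 1 N] N(1) by auto
    moreover have "[N + 1 = i + 1] (mod M)"
      using N(2) cong_add_rcancel_nat by blast
    ultimately show ?case
      by (intro exI[of _ "N * b ^ L + 1"]) (auto intro: cong_trans)
  qed (intro exI[of _ 0], simp)
  then show ?thesis
  proof (induction j)
    case (Suc j)
    then obtain N where N: "T e b N = i + j" "[N = i + j * b] (mod M)" by blast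
    have "[N * b ^ L + b = N + b] (mod M)" "T e b (N * b ^ L + b) = i + Suc j"
      using append_block[of b N] N(1) by auto
    moreover have "[N + b = i + Suc j * b] (mod M)"
      using N(2) cong_add_rcancel_nat[of N b "i + j * b" M] by (simp add: algebra_simps)
    ultimately show ?case
      by (intro exI[of _ "N * b ^ L + b"]) (auto intro: cong_trans)
  qed simp
qed

lemma lift_cong_to_mult_modulus:
  fixes h c m P :: int
  assumes "[h = c] (mod m)" "P > 0"
  shows "\<exists>j::nat. j < P \<and> [h + int j * m = c] (mod m * P)"
proof -
  obtain q where q: "c - h = m * q"
    using assms(1) by (metis cong_iff_dvd_diff cong_sym dvdE)
  define d r where "d = q div P" and "r = q mod P"
  have "q = d * P + r"
    by (simp add: d_def r_def)
  then have "c = h + r * m + d * (m * P)"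
    using q by (simp add: algebra_simps)
  then have "[h + r * m = c] (mod m * P)"
    by (simp add: cong_def)
  then show ?thesis
    using assms(2) by (intro exI[of _ "nat r"]) (simp add: r_def)
qed

lemma exists_happy_ge_cong:
  assumes "b \<ge> 2" "e \<ge> 1" "happy e b h0"
  obtains h where "happy e b h" "K \<le> h" "[h = h0] (mod b - 1)"
proof
  show "happy e b (h0 * b ^ K)"
    using happy_mult_base_power[OF assms] .
  have "K < 2 ^ K" by (rule less_exp)
  also have "\<dots> \<le> b ^ K" using assms(1) by (simp add: power_mono)
  also have "\<dots> \<le> h0 * b ^ K" using assms(3) by (simp add: happy_def)
  finally show "K \<le> h0 * b ^ K" by simp
  have "[b = 1] (mod b - 1)"
    using assms(1) by (simp add: cong_altdef_nat)
  then have "[h0 * b ^ K = h0 * 1 ^ K] (mod b - 1)"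
    by (intro cong_mult cong_pow cong_refl)
  then show "[h0 * b ^ K = h0] (mod b - 1)" by simp
qed

lemma exists_happy_lift_cong:
  fixes a :: int
  assumes "b \<ge> 2" "e \<ge> 1" "coprime b P" "happy e b h" "P \<le> h"
    and "[int h = a] (mod int b - 1)"
  shows "\<exists>N. happy e b N \<and> [int N = a] (mod (int b - 1) * int P)"
proof -
  define m where "m = b - 1"
  have b_eq: "b = Suc m" and int_m: "int b - 1 = int m"
    using assms(1) by (auto simp: m_def)
  have "P > 0"
    using assms(1,3) by (auto intro!: gr0I)
  then obtain j where j: "j < P" "[int h + int j * int m = a] (mod int m * int P)"
    using lift_cong_to_mult_modulus[of "int h" a "int m" "int P"] assms(6) int_m by auto
  have "coprime b (m * P)"
    using assms(3) by (simp add: b_eq)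
  then obtain N where N: "T e b N = (h - j) + j" "[N = (h - j) + j * b] (mod m * P)"
    using exists_T_and_residue[OF assms(1,2)] by blast
  have "T e b N = h" "h > 0"
    using N(1) j(1) assms(4,5) by (auto simp: happy_def)
  then have "N > 0"
    by (auto intro!: gr0I)
  then have "happy e b N"
    using happy_if_happy_T[of e b N] assms(4) \<open>T e b N = h\<close> by simp
  moreover have "[int N = int ((h - j) + j * b)] (mod int m * int P)"
    using N(2) unfolding of_nat_mult[symmetric] cong_int_iff .
  moreover have "int ((h - j) + j * b) = int h + int j * int m"
    using j(1) assms(5) by (simp add: b_eq algebra_simps of_nat_diff)
  ultimately show ?thesis
    using j(2) int_m cong_trans by metis
qed

theorem corollary2p2:
  fixes e b :: nat
  assumes "e \<ge> 1" and "b \<ge> 2" and "even b"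
    and "\<forall>a::int. \<exists>h. happy e b h \<and> [int h = a] (mod (int b - 1))"
  shows "\<forall>a::int. \<exists>h'. happy e b h' \<and> [int h' = a] (mod ((int b - 1) ^ e))"
proof
  fix a :: int
  define P where "P = (b - 1) ^ (e - 1)"
  obtain h0 where h0: "happy e b h0" "[int h0 = a] (mod int b - 1)"
    using assms(4) by blast
  obtain h where h: "happy e b h" "P \<le> h" "[h = h0] (mod b - 1)"
    using exists_happy_ge_cong[OF assms(2,1) h0(1)] .
  have "[int h = int h0] (mod int b - 1)"
    using h(3) assms(2) unfolding cong_int_iff[symmetric] by (simp add: of_nat_diff)
  then have "[int h = a] (mod int b - 1)"
    using h0(2) by (rule cong_trans)
  moreover have "coprime b P"
    using assms(2) coprime_diff_one_right_nat[of b] by (simp add: P_def coprime_power_right_iff)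
  moreover have "(int b - 1) * int P = (int b - 1) ^ e"
    using assms(1,2) by (cases e) (auto simp: P_def of_nat_diff)
  ultimately show "\<exists>h'. happy e b h' \<and> [int h' = a] (mod ((int b - 1) ^ e))"
    using exists_happy_lift_cong[OF assms(2,1) _ h(1,2)] by metis
qed

end
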